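(* Let $f:\mathbb{N}_+\to\mathbb{N}_+$ be strictly increasing and let $g:\mathbb{R}_{\ge0}\to\mathbb{R}_{\ge0}$ be continuous and bijective with $g(n)=f(n)$ for all $n\in\mathbb{N}_+$. Then $L_{\mathbb{N}_+}(f)^{-1}\in\Theta(g^{-1})$.
   Context: For $h:\mathbb{N}_+\to\mathbb{N}_+$, the linear interpolation $L_{\mathbb{N}_+}(h):\mathbb{R}_{\ge0}\to\mathbb{R}_{\ge0}$ is the polygonal chain starting at $(0,0)$ and passing through the points $(n,h(n))$, $n\in\mathbb{N}_+$, in increasing order of $n$. $\Theta$ denotes asymptotic equivalence up to constant factors as $x\to\infty$. *)

theory Defs
  imports "HOL-Analysis.Analysis" "HOL-Library.Landau_Symbols"
begin

text \<open>Value of h at n, with the convention that the chain starts at (0,0):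
  only the values h n for n >= 1 are used.\<close>
definition interp_pt :: "(nat \<Rightarrow> nat) \<Rightarrow> nat \<Rightarrow> real" where
  "interp_pt h n = (if n = 0 then 0 else real (h n))"

text \<open>Linear interpolation L_{N+}(h): the polygonal chain through (0,0), (1,h 1), (2,h 2), ...
  (meaningful for x >= 0).\<close>
definition lin_interp :: "(nat \<Rightarrow> nat) \<Rightarrow> real \<Rightarrow> real" where
  "lin_interp h x =
     (let n = nat \<lfloor>x\<rfloor>
      in interp_pt h n + (x - real n) * (interp_pt h (Suc n) - interp_pt h n))"

end

theory Submission
  imports Defs
begin

text \<open>Both the polygonal chain through the points (n, f n) and g are strictly increasing
  bijections of [0,\<infinity>) that agree at every positive integer. Hence if y lies between
  f m and f (m + 1), both preimages of y lie in [m, m + 1], so the two inverse functions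
  differ by at most 1; as both are eventually at least 1, each is at most twice the other.\<close>

lemma interp_pt_strict_mono:
  assumes "\<And>n. n \<ge> 1 \<Longrightarrow> f n \<ge> 1" and "strict_mono_on {1..} f"
  shows "strict_mono (interp_pt f)"
  unfolding strict_mono_Suc_iff
proof
  fix n :: nat
  show "interp_pt f n < interp_pt f (Suc n)"
  proof (cases "n = 0")
    case True
    then show ?thesis using assms(1)[of 1] by (simp add: interp_pt_def)
  next
    case False
    then have "f n < f (Suc n)" using assms(2) by (simp add: strict_mono_on_def)
    then show ?thesis using False by (simp add: interp_pt_def)
  qed
qed

lemma interp_pt_ge:
  assumes "strict_mono (interp_pt h)"
  shows "real n \<le> interp_pt h n"
proof -
  have "strict_mono (\<lambda>n. if n = 0 then 0 else h n)"
    using assms unfolding strict_mono_def interp_pt_def by (metis of_nat_0 of_nat_less_iff)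
  from strict_mono_imp_increasing[OF this, of n] show ?thesis
    by (cases "n = 0") (simp_all add: interp_pt_def)
qed

lemma lin_interp_of_nat: "lin_interp h (real n) = interp_pt h n"
  by (simp add: lin_interp_def)

lemma lin_interp_affine:
  assumes "nat \<lfloor>x\<rfloor> = n"
  shows "lin_interp h x = interp_pt h n + (x - real n) * (interp_pt h (Suc n) - interp_pt h n)"
  using assms by (simp add: lin_interp_def Let_def)

lemma lin_interp_floor_bounds:
  assumes "strict_mono (interp_pt h)" and "0 \<le> x"
  shows "interp_pt h (nat \<lfloor>x\<rfloor>) \<le> lin_interp h x"
    and "lin_interp h x < interp_pt h (Suc (nat \<lfloor>x\<rfloor>))"
proof -
  define n where "n = nat \<lfloor>x\<rfloor>"
  have n: "real n \<le> x" "x < real n + 1" using assms(2) unfolding n_def by linarith+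
  have step: "interp_pt h n < interp_pt h (Suc n)" using assms(1) by (simp add: strict_mono_def)
  have L: "lin_interp h x = interp_pt h n + (x - real n) * (interp_pt h (Suc n) - interp_pt h n)"
    by (rule lin_interp_affine) (simp add: n_def)
  have "0 \<le> (x - real n) * (interp_pt h (Suc n) - interp_pt h n)" using n step by simp
  then show "interp_pt h (nat \<lfloor>x\<rfloor>) \<le> lin_interp h x" using L by (simp add: n_def)
  have "(x - real n) * (interp_pt h (Suc n) - interp_pt h n) < 1 * (interp_pt h (Suc n) - interp_pt h n)"
    using n step by (intro mult_strict_right_mono) auto
  then show "lin_interp h x < interp_pt h (Suc (nat \<lfloor>x\<rfloor>))" using L by (simp add: n_def)
qed

lemma lin_interp_strict_mono_on:
  assumes "strict_mono (interp_pt h)"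
  shows "strict_mono_on {0..} (lin_interp h)"
proof (rule strict_mono_onI)
  fix x y :: real
  assume "x \<in> {0..}" "y \<in> {0..}" "x < y"
  then have x: "0 \<le> x" and y: "0 \<le> y" and xy: "x < y" by auto
  show "lin_interp h x < lin_interp h y"
  proof (cases "nat \<lfloor>x\<rfloor> = nat \<lfloor>y\<rfloor>")
    case True
    define n where "n = nat \<lfloor>x\<rfloor>"
    have step: "interp_pt h n < interp_pt h (Suc n)" using assms by (simp add: strict_mono_def)
    have "(x - real n) * (interp_pt h (Suc n) - interp_pt h n)
        < (y - real n) * (interp_pt h (Suc n) - interp_pt h n)"
      using xy step by (intro mult_strict_right_mono) auto
    then show ?thesis
      using lin_interp_affine[of x n h] lin_interp_affine[of y n h] True by (simp add: n_def)
  next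
    case False
    then have "Suc (nat \<lfloor>x\<rfloor>) \<le> nat \<lfloor>y\<rfloor>"
      using nat_mono[OF floor_mono[of x y]] xy by linarith
    then have "interp_pt h (Suc (nat \<lfloor>x\<rfloor>)) \<le> interp_pt h (nat \<lfloor>y\<rfloor>)"
      using assms by (simp add: strict_mono_less_eq)
    then show ?thesis
      using lin_interp_floor_bounds[OF assms x] lin_interp_floor_bounds[OF assms y] by linarith
  qed
qed

lemma lin_interp_onto:
  assumes "strict_mono (interp_pt h)"
  shows "{0..} \<subseteq> lin_interp h ` {0..}"
proof
  fix y :: real
  assume "y \<in> {0..}"
  then have y: "0 \<le> y" by simp
  have "\<exists>k. y < interp_pt h k"
    using interp_pt_ge[OF assms, of "nat \<lceil>y\<rceil> + 1"] by (intro exI[of _ "nat \<lceil>y\<rceil> + 1"]) linarith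
  then obtain k where k: "y < interp_pt h k" and least: "\<forall>j<k. \<not> y < interp_pt h j"
    using exists_least_iff[of "\<lambda>k. y < interp_pt h k"] by blast
  have "k \<noteq> 0" using k y by (auto simp: interp_pt_def split: if_splits)
  then obtain n where kn: "k = Suc n" by (cases k) auto
  have yn: "interp_pt h n \<le> y" using least[rule_format, of n] kn by simp
  have step: "interp_pt h n < interp_pt h (Suc n)" using assms by (simp add: strict_mono_def)
  define t where "t = (y - interp_pt h n) / (interp_pt h (Suc n) - interp_pt h n)"
  have t: "0 \<le> t" "t < 1" using yn k kn step by (simp_all add: t_def)
  then have "nat \<lfloor>real n + t\<rfloor> = n" by linarith
  then have "lin_interp h (real n + t) = y"
    using step by (simp add: lin_interp_affine t_def)
  moreover have "real n + t \<in> {0..}" using t by simp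
  ultimately show "y \<in> lin_interp h ` {0..}" by force
qed

lemma continuous_inj_strict_mono_on:
  fixes g :: "real \<Rightarrow> real"
  assumes "is_interval S" "continuous_on S g" "inj_on g S"
    and "a \<in> S" "b \<in> S" "a < b" "g a < g b"
  shows "strict_mono_on S g"
proof -
  have "strict_mono_on S g \<or> strict_antimono_on S g"
    using injective_eq_monotone_map[OF assms(1,2)] assms(3) by simp
  moreover have "\<not> strict_antimono_on S g"
  proof
    assume "strict_antimono_on S g"
    then have "g b < g a" using assms(4-6) by (simp add: monotone_on_def)
    with \<open>g a < g b\<close> show False by simp
  qed
  ultimately show ?thesis by blast
qed

lemma inv_into_ge_of_le:
  fixes \<phi> :: "'a::linorder \<Rightarrow> 'b::order"
  assumes "strict_mono_on S \<phi>" "x \<in> S" "y \<in> \<phi> ` S" "\<phi> x \<le> y"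
  shows "x \<le> inv_into S \<phi> y"
proof (rule ccontr)
  assume "\<not> x \<le> inv_into S \<phi> y"
  then have "\<phi> (inv_into S \<phi> y) < \<phi> x"
    using assms(1,2) inv_into_into[OF assms(3)] by (simp add: strict_mono_on_def)
  then show False using assms(4) f_inv_into_f[OF assms(3)] by simp
qed

lemma inv_into_le_add_one:
  fixes \<phi> \<psi> :: "real \<Rightarrow> real"
  assumes "strict_mono_on {0..} \<phi>" "strict_mono_on {0..} \<psi>"
    and "\<And>n. n \<ge> 1 \<Longrightarrow> \<phi> (real n) = \<psi> (real n)"
    and "y \<in> \<phi> ` {0..}" "y \<in> \<psi> ` {0..}"
  shows "inv_into {0..} \<phi> y \<le> inv_into {0..} \<psi> y + 1"
proof (rule ccontr)
  define a where "a = inv_into {0..} \<phi> y"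
  define b where "b = inv_into {0..} \<psi> y"
  have a: "0 \<le> a" "\<phi> a = y" using inv_into_into[OF assms(4)] f_inv_into_f[OF assms(4)]
    by (auto simp: a_def)
  have b: "0 \<le> b" "\<psi> b = y" using inv_into_into[OF assms(5)] f_inv_into_f[OF assms(5)]
    by (auto simp: b_def)
  assume "\<not> a \<le> b + 1"
  define m where "m = Suc (nat \<lfloor>b\<rfloor>)"
  have m: "b < real m" "real m < a" "m \<ge> 1" using \<open>\<not> a \<le> b + 1\<close> b(1) unfolding m_def by linarith+
  have "\<psi> b < \<psi> (real m)" using assms(2) m b(1) by (simp add: strict_mono_on_def)
  also have "\<dots> = \<phi> (real m)" using assms(3)[OF m(3)] by simp
  also have "\<dots> < \<phi> a" using assms(1) m by (simp add: strict_mono_on_def)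
  finally show False using a b by simp
qed

lemma bigtheta_of_bounded_diff:
  fixes A B :: "'a \<Rightarrow> real"
  assumes "eventually (\<lambda>x. 1 \<le> A x \<and> 1 \<le> B x \<and> \<bar>A x - B x\<bar> \<le> c) F"
  shows "A \<in> \<Theta>[F](B)"
proof -
  have bigo: "U \<in> O[F](V)"
    if "eventually (\<lambda>x. 1 \<le> U x \<and> 1 \<le> V x \<and> \<bar>U x - V x\<bar> \<le> c) F"
    for U V :: "'a \<Rightarrow> real"
  proof (rule bigoI[where c="1 + c"])
    show "eventually (\<lambda>x. norm (U x) \<le> (1 + c) * norm (V x)) F"
      using that
    proof eventually_elim
      case (elim x)
      then have "0 \<le> c" and "U x \<le> V x + c" by (auto simp: abs_le_iff)
      moreover from \<open>0 \<le> c\<close> elim have "c * 1 \<le> c * V x" by (intro mult_left_mono) auto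
      ultimately show ?case using elim by (simp add: algebra_simps)
    qed
  qed
  have "eventually (\<lambda>x. 1 \<le> B x \<and> 1 \<le> A x \<and> \<bar>B x - A x\<bar> \<le> c) F"
    using assms by eventually_elim (simp add: abs_minus_commute)
  with bigo[OF assms] show ?thesis
    by (simp add: bigtheta_def bigomega_iff_bigo bigo)
qed

lemma inv_into_bigtheta_of_agree_on_nat:
  fixes \<phi> \<psi> :: "real \<Rightarrow> real"
  assumes "strict_mono_on {0..} \<phi>" "strict_mono_on {0..} \<psi>"
    and "\<And>n. n \<ge> 1 \<Longrightarrow> \<phi> (real n) = \<psi> (real n)"
    and "{0..} \<subseteq> \<phi> ` {0..}" "{0..} \<subseteq> \<psi> ` {0..}"
  shows "inv_into {0..} \<phi> \<in> \<Theta>[at_top](inv_into {0..} \<psi>)"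
proof (rule bigtheta_of_bounded_diff[where c=1])
  have agree_1: "\<phi> 1 = \<psi> 1" using assms(3)[of 1] by simp
  show "\<forall>\<^sub>F y in at_top. 1 \<le> inv_into {0..} \<phi> y \<and> 1 \<le> inv_into {0..} \<psi> y
      \<and> \<bar>inv_into {0..} \<phi> y - inv_into {0..} \<psi> y\<bar> \<le> 1"
    using eventually_ge_at_top[of "max 0 (\<phi> 1)"]
  proof eventually_elim
    fix y :: real
    assume y: "max 0 (\<phi> 1) \<le> y"
    then have in_ranges: "y \<in> \<phi> ` {0..}" "y \<in> \<psi> ` {0..}" using assms(4,5) by auto
    have "1 \<le> inv_into {0..} \<phi> y"
      using inv_into_ge_of_le[OF assms(1) _ in_ranges(1)] y by simp
    moreover have "1 \<le> inv_into {0..} \<psi> y"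
      using inv_into_ge_of_le[OF assms(2) _ in_ranges(2)] y agree_1 by simp
    moreover have "inv_into {0..} \<phi> y \<le> inv_into {0..} \<psi> y + 1"
      using inv_into_le_add_one[OF assms(1,2,3) in_ranges] .
    moreover have "inv_into {0..} \<psi> y \<le> inv_into {0..} \<phi> y + 1"
      using inv_into_le_add_one[OF assms(2,1) assms(3)[symmetric] in_ranges(2,1)] .
    ultimately show "1 \<le> inv_into {0..} \<phi> y \<and> 1 \<le> inv_into {0..} \<psi> y
      \<and> \<bar>inv_into {0..} \<phi> y - inv_into {0..} \<psi> y\<bar> \<le> 1"
      by linarith
  qed
qed

theorem lemma3:
  fixes f :: "nat \<Rightarrow> nat" and g :: "real \<Rightarrow> real"
  assumes f_pos: "\<And>n. n \<ge> 1 \<Longrightarrow> f n \<ge> 1"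
    and f_mono: "strict_mono_on {1..} f"
    and g_cont: "continuous_on {0..} g"
    and g_bij: "bij_betw g {0..} {0..}"
    and g_f: "\<And>n. n \<ge> 1 \<Longrightarrow> g (real n) = real (f n)"
  shows "inv_into {0..} (lin_interp f) \<in> \<Theta>[at_top](inv_into {0..} g)"
proof (rule inv_into_bigtheta_of_agree_on_nat)
  have interp_mono: "strict_mono (interp_pt f)"
    using interp_pt_strict_mono[OF f_pos f_mono] .
  show "strict_mono_on {0..} (lin_interp f)"
    using lin_interp_strict_mono_on[OF interp_mono] .
  show "{0..} \<subseteq> lin_interp f ` {0..}"
    using lin_interp_onto[OF interp_mono] .
  have "g 1 < g 2"
    using g_f[of 1] g_f[of 2] f_mono by (simp add: strict_mono_on_def)
  then show "strict_mono_on {0..} g"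
    using g_cont g_bij by (intro continuous_inj_strict_mono_on[of _ _ 1 2])
      (auto simp: is_interval_ci bij_betw_def)
  show "{0..} \<subseteq> g ` {0..}"
    using g_bij by (simp add: bij_betw_def)
  show "lin_interp f (real n) = g (real n)" if "n \<ge> 1" for n
    using that g_f by (simp add: lin_interp_of_nat interp_pt_def)
qed

end
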